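(* Let $G$, $A$, $H$, $(K,v)$, $\sigma$, $\delta$ be as in the context, let $\alpha,\alpha':H\to G$ be two transversal maps with associated cocycles $\beta,\beta'$. Then the valued field $(K(t^H,\beta')_\delta,val')$, with value group $G_{\beta'}$, is isomorphic as a valued field to $(K(t^H,\beta)_\delta,val)$, with value group $G_\beta$.
   Context: $G$ is an ordered abelian group with smallest nonzero convex subgroup $A$, $H=G/A$ with the induced order, $\rho:G\to H$ the projection. A transversal map is $\alpha:H\to G$ with $\rho\alpha=\mathrm{id}_H$, $\alpha(0)=0$; its cocycle is $\beta(h,h')=\alpha(h+h')-\alpha(h)-\alpha(h')\in A$. $G_\beta$ is $A\times H$ with $(z,h)+(z',h')=(z+z'-\beta(h,h'),h+h')$ and lexicographic order ($(z,h)\le(z',h')$ iff $h<h'$, or $h=h'$ and $z\le z'$). $(K,v)$ is a valued field of characteristic $0$, residue characteristic $p$, value group $A$, with cross-section $\sigma:A\to K^\times$ ($v(\sigma(a))=a$). For an infinite cardinal $\delta$, $K(t^H,\beta)_\delta$ is the field of formal sums $\sum_{h\in S}a_ht^h$, $S\subseteq H$ well ordered, $|S|\le\delta$, $a_h\in K$, with coefficientwise addition, multiplication $\left(\sum a_ht^h\right)\left(\sum b_ht^h\right)=\sum_l\left(\sum_{h+h'=l}a_hb_{h'}\sigma(-\beta(h,h'))\right)t^l$, and valuation $val(\sum_{h\in S}a_ht^h)=(v(a_{h_0}),h_0)$, $h_0=\min S$; similarly for $\beta'$. *)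

theory Defs
  imports Main
begin

definition subgroup_of :: "'g::linordered_ab_group_add set \<Rightarrow> bool" where
  "subgroup_of B \<longleftrightarrow> 0 \<in> B \<and> (\<forall>x\<in>B. \<forall>y\<in>B. x + y \<in> B) \<and> (\<forall>x\<in>B. - x \<in> B)"

definition convex_subgroup :: "'g::linordered_ab_group_add set \<Rightarrow> bool" where
  "convex_subgroup B \<longleftrightarrow> subgroup_of B \<and>
     (\<forall>a\<in>B. \<forall>b\<in>B. \<forall>x. a \<le> x \<and> x \<le> b \<longrightarrow> x \<in> B)"

definition smallest_nonzero_convex_subgroup :: "'g::linordered_ab_group_add set \<Rightarrow> bool" where
  "smallest_nonzero_convex_subgroup A \<longleftrightarrow> convex_subgroup A \<and> A \<noteq> {0} \<and>
     (\<forall>B. convex_subgroup B \<and> B \<noteq> {0} \<longrightarrow> A \<subseteq> B)"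

text \<open>H = G/A with the induced order, presented by the projection rho: a surjective
  order-preserving group homomorphism onto the ordered abelian group H whose kernel is A.\<close>
definition is_quotient_projection ::
  "'g::linordered_ab_group_add set \<Rightarrow> ('g \<Rightarrow> 'h::linordered_ab_group_add) \<Rightarrow> bool" where
  "is_quotient_projection A \<rho> \<longleftrightarrow> surj \<rho> \<and> (\<forall>x y. \<rho> (x + y) = \<rho> x + \<rho> y) \<and>
     {x. \<rho> x = 0} = A \<and> mono \<rho>"

definition transversal_map :: "('g \<Rightarrow> 'h::linordered_ab_group_add) \<Rightarrow> ('h \<Rightarrow> 'g::linordered_ab_group_add) \<Rightarrow> bool" where
  "transversal_map \<rho> \<alpha> \<longleftrightarrow> (\<forall>h. \<rho> (\<alpha> h) = h) \<and> \<alpha> 0 = 0"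

definition cocycle :: "('h::linordered_ab_group_add \<Rightarrow> 'g::linordered_ab_group_add) \<Rightarrow> 'h \<Rightarrow> 'h \<Rightarrow> 'g" where
  "cocycle \<alpha> h h' = \<alpha> (h + h') - \<alpha> h - \<alpha> h'"

definition gb_add :: "('h \<Rightarrow> 'h \<Rightarrow> 'g) \<Rightarrow> ('g::ab_group_add \<times> 'h::ab_group_add) \<Rightarrow> ('g \<times> 'h) \<Rightarrow> ('g \<times> 'h)" where
  "gb_add \<beta> x y = (fst x + fst y - \<beta> (snd x) (snd y), snd x + snd y)"

definition gb_le :: "('g::linorder \<times> 'h::linorder) \<Rightarrow> ('g \<times> 'h) \<Rightarrow> bool" where
  "gb_le x y \<longleftrightarrow> snd x < snd y \<or> (snd x = snd y \<and> fst x \<le> fst y)"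

definition valuation_onto :: "('k::field \<Rightarrow> 'g::linordered_ab_group_add) \<Rightarrow> 'g set \<Rightarrow> bool" where
  "valuation_onto v A \<longleftrightarrow>
     (\<forall>x y. x \<noteq> 0 \<and> y \<noteq> 0 \<longrightarrow> v (x * y) = v x + v y) \<and>
     (\<forall>x y. x \<noteq> 0 \<and> y \<noteq> 0 \<and> x + y \<noteq> 0 \<longrightarrow> min (v x) (v y) \<le> v (x + y)) \<and>
     v ` (UNIV - {0}) = A"

definition cross_section :: "('k::field \<Rightarrow> 'g::linordered_ab_group_add) \<Rightarrow> 'g set \<Rightarrow> ('g \<Rightarrow> 'k) \<Rightarrow> bool" where
  "cross_section v A \<sigma> \<longleftrightarrow>
     (\<forall>a\<in>A. \<sigma> a \<noteq> 0 \<and> v (\<sigma> a) = a) \<and> (\<forall>a\<in>A. \<forall>b\<in>A. \<sigma> (a + b) = \<sigma> a * \<sigma> b)"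

definition supp :: "('h \<Rightarrow> 'k::zero) \<Rightarrow> 'h set" where
  "supp f = {h. f h \<noteq> 0}"

definition well_ordered_set :: "'h::linorder set \<Rightarrow> bool" where
  "well_ordered_set S \<longleftrightarrow> (\<forall>T\<subseteq>S. T \<noteq> {} \<longrightarrow> (\<exists>m\<in>T. \<forall>x\<in>T. m \<le> x))"

text \<open>The infinite cardinal delta is given as the cardinality of an infinite set D.\<close>
definition hahn_carrier :: "'d set \<Rightarrow> ('h::linorder \<Rightarrow> 'k::zero) set" where
  "hahn_carrier D = {f. well_ordered_set (supp f) \<and> (card_of (supp f), card_of D) \<in> ordLeq}"

definition hahn_add :: "('h \<Rightarrow> 'k::field) \<Rightarrow> ('h \<Rightarrow> 'k) \<Rightarrow> 'h \<Rightarrow> 'k" where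
  "hahn_add f g = (\<lambda>h. f h + g h)"

definition hahn_mul :: "('g \<Rightarrow> 'k::field) \<Rightarrow> ('h \<Rightarrow> 'h \<Rightarrow> 'g::ab_group_add) \<Rightarrow>
    ('h::ab_group_add \<Rightarrow> 'k) \<Rightarrow> ('h \<Rightarrow> 'k) \<Rightarrow> 'h \<Rightarrow> 'k" where
  "hahn_mul \<sigma> \<beta> f g = (\<lambda>l. \<Sum>(h, h') \<in> {(h, h'). h + h' = l \<and> f h \<noteq> 0 \<and> g h' \<noteq> 0}.
      f h * g h' * \<sigma> (- \<beta> h h'))"

definition hahn_one :: "'h::zero \<Rightarrow> 'k::field" where
  "hahn_one = (\<lambda>h. if h = 0 then 1 else 0)"

text \<open>val(sum a_h t^h) = (v(a_{h0}), h0), h0 = min supp (meaningful for nonzero series).\<close>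
definition hahn_val :: "('k::field \<Rightarrow> 'g) \<Rightarrow> ('h::linorder \<Rightarrow> 'k) \<Rightarrow> 'g \<times> 'h" where
  "hahn_val v f = (let h0 = (LEAST h. f h \<noteq> 0) in (v (f h0), h0))"

definition valued_field_iso ::
  "'d set \<Rightarrow> 'g set \<Rightarrow> ('k::field \<Rightarrow> 'g::linordered_ab_group_add) \<Rightarrow> ('g \<Rightarrow> 'k)
   \<Rightarrow> ('h \<Rightarrow> 'h \<Rightarrow> 'g) \<Rightarrow> ('h \<Rightarrow> 'h \<Rightarrow> 'g)
   \<Rightarrow> (('h::linordered_ab_group_add \<Rightarrow> 'k) \<Rightarrow> ('h \<Rightarrow> 'k)) \<Rightarrow> ('g \<times> 'h \<Rightarrow> 'g \<times> 'h) \<Rightarrow> bool" where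
  "valued_field_iso D A v \<sigma> \<beta>' \<beta> \<phi> \<psi> \<longleftrightarrow>
     bij_betw \<phi> (hahn_carrier D) (hahn_carrier D) \<and>
     (\<forall>f\<in>hahn_carrier D. \<forall>g\<in>hahn_carrier D.
        \<phi> (hahn_add f g) = hahn_add (\<phi> f) (\<phi> g) \<and>
        \<phi> (hahn_mul \<sigma> \<beta>' f g) = hahn_mul \<sigma> \<beta> (\<phi> f) (\<phi> g)) \<and>
     \<phi> hahn_one = hahn_one \<and>
     bij_betw \<psi> (A \<times> UNIV) (A \<times> UNIV) \<and>
     (\<forall>x\<in>A \<times> UNIV. \<forall>y\<in>A \<times> UNIV.
        \<psi> (gb_add \<beta>' x y) = gb_add \<beta> (\<psi> x) (\<psi> y) \<and>
        (gb_le x y \<longleftrightarrow> gb_le (\<psi> x) (\<psi> y))) \<and>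
     (\<forall>f\<in>hahn_carrier D. f \<noteq> (\<lambda>_. 0) \<longrightarrow> hahn_val v (\<phi> f) = \<psi> (hahn_val v f))"

end

theory Submission
  imports Defs
begin

text \<open>Two transversals differ by \<open>\<gamma> = \<alpha>' - \<alpha>\<close>, which takes values in \<open>A\<close>, and the
  cocycles differ by its coboundary: \<open>\<beta>' = \<beta> + \<delta>\<gamma>\<close>. Hence the shift
  \<open>(z, h) \<mapsto> (z + \<gamma> h, h)\<close> is an ordered group isomorphism \<open>G\<^sub>\<beta>' \<rightarrow> G\<^sub>\<beta>\<close>, and rescaling
  each coefficient, \<open>\<Sum> a\<^sub>h t\<^sup>h \<mapsto> \<Sum> a\<^sub>h \<sigma>(\<gamma> h) t\<^sup>h\<close>, turns the twisted multiplication
  for \<open>\<beta>'\<close> into the one for \<open>\<beta>\<close>, because \<open>\<sigma>\<close> is multiplicative on \<open>A\<close>. The rescaling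
  preserves supports and shifts the valuation exactly by the group isomorphism.\<close>

definition cohomologous_via :: "('h::ab_group_add \<Rightarrow> 'g::ab_group_add) \<Rightarrow> ('h \<Rightarrow> 'h \<Rightarrow> 'g) \<Rightarrow> ('h \<Rightarrow> 'h \<Rightarrow> 'g) \<Rightarrow> bool"
  where "cohomologous_via \<gamma> \<beta>' \<beta> \<longleftrightarrow> (\<forall>h h'. \<beta>' h h' = \<beta> h h' + \<gamma> (h + h') - \<gamma> h - \<gamma> h')"

definition gb_shift :: "('h \<Rightarrow> 'g::plus) \<Rightarrow> 'g \<times> 'h \<Rightarrow> 'g \<times> 'h"
  where "gb_shift \<gamma> x = (fst x + \<gamma> (snd x), snd x)"

definition hahn_twist :: "('g \<Rightarrow> 'k::times) \<Rightarrow> ('h \<Rightarrow> 'g) \<Rightarrow> ('h \<Rightarrow> 'k) \<Rightarrow> 'h \<Rightarrow> 'k"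
  where "hahn_twist \<sigma> \<gamma> f = (\<lambda>h. f h * \<sigma> (\<gamma> h))"

lemma subgroup_of_diff: "subgroup_of B \<Longrightarrow> x \<in> B \<Longrightarrow> y \<in> B \<Longrightarrow> x - y \<in> B"
  unfolding subgroup_of_def by (metis diff_conv_add_uminus)

lemma quotient_projection_diff:
  assumes "is_quotient_projection A \<rho>"
  shows "\<rho> (x - y) = \<rho> x - \<rho> y"
  using assms unfolding is_quotient_projection_def by (metis add_diff_cancel diff_add_cancel)

lemma quotient_projection_eq_imp_diff:
  assumes "is_quotient_projection A \<rho>" and "\<rho> x = \<rho> y"
  shows "x - y \<in> A"
proof -
  have "\<rho> (x - y) = 0" using assms by (simp add: quotient_projection_diff)
  then show ?thesis using assms(1) unfolding is_quotient_projection_def by blast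
qed

lemma transversal_diff_in_kernel:
  assumes "is_quotient_projection A \<rho>" "transversal_map \<rho> \<alpha>" "transversal_map \<rho> \<alpha>'"
  shows "\<alpha>' h - \<alpha> h \<in> A"
  using assms(2,3) by (intro quotient_projection_eq_imp_diff[OF assms(1)]) (simp add: transversal_map_def)

lemma cocycle_in_kernel:
  assumes "is_quotient_projection A \<rho>" "transversal_map \<rho> \<alpha>"
  shows "cocycle \<alpha> h h' \<in> A"
  unfolding cocycle_def using assms
  by (intro quotient_projection_eq_imp_diff[OF assms(1)])
    (simp add: quotient_projection_diff transversal_map_def)

lemma cocycle_cohomologous: "cohomologous_via (\<lambda>h. \<alpha>' h - \<alpha> h) (cocycle \<alpha>') (cocycle \<alpha>)"
  unfolding cohomologous_via_def cocycle_def by (simp add: algebra_simps)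

lemma gb_shift_add:
  "cohomologous_via \<gamma> \<beta>' \<beta> \<Longrightarrow> gb_shift \<gamma> (gb_add \<beta>' x y) = gb_add \<beta> (gb_shift \<gamma> x) (gb_shift \<gamma> y)"
  unfolding cohomologous_via_def gb_shift_def gb_add_def by (simp add: algebra_simps)

lemma gb_le_shift_iff:
  fixes \<gamma> :: "'h::linorder \<Rightarrow> 'g::linordered_ab_group_add"
  shows "gb_le (gb_shift \<gamma> x) (gb_shift \<gamma> y) \<longleftrightarrow> gb_le x y"
  unfolding gb_le_def gb_shift_def by auto

lemma bij_betw_gb_shift:
  assumes "subgroup_of A" and "\<And>h. \<gamma> h \<in> A"
  shows "bij_betw (gb_shift \<gamma>) (A \<times> UNIV) (A \<times> UNIV)"
proof (rule bij_betw_byWitness[where f' = "\<lambda>x. (fst x - \<gamma> (snd x), snd x)"])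
  show "gb_shift \<gamma> ` (A \<times> UNIV) \<subseteq> A \<times> UNIV"
    using assms unfolding gb_shift_def subgroup_of_def by auto
  show "(\<lambda>x. (fst x - \<gamma> (snd x), snd x)) ` (A \<times> UNIV) \<subseteq> A \<times> UNIV"
    using assms subgroup_of_diff by fastforce
qed (auto simp: gb_shift_def)

lemma cross_section_zero:
  assumes "cross_section v A \<sigma>" and "0 \<in> A"
  shows "\<sigma> 0 = 1"
proof -
  have "\<sigma> 0 * \<sigma> 0 = \<sigma> 0 * 1" and "\<sigma> 0 \<noteq> 0"
    using assms unfolding cross_section_def by (metis add_0 mult_1_right)+
  then show ?thesis by simp
qed

lemma supp_hahn_twist:
  fixes \<sigma> :: "'g \<Rightarrow> 'k::field"
  shows "(\<And>h. \<sigma> (\<gamma> h) \<noteq> 0) \<Longrightarrow> supp (hahn_twist \<sigma> \<gamma> f) = supp f"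
  unfolding supp_def hahn_twist_def by simp

lemma bij_betw_hahn_twist:
  fixes \<sigma> :: "'g \<Rightarrow> 'k::field"
  assumes "\<And>h. \<sigma> (\<gamma> h) \<noteq> 0"
  shows "bij_betw (hahn_twist \<sigma> \<gamma>) (hahn_carrier D) (hahn_carrier D)"
proof (rule bij_betw_byWitness[where f' = "\<lambda>f h. f h / \<sigma> (\<gamma> h)"])
  have "supp (\<lambda>h. f h / \<sigma> (\<gamma> h)) = supp f" for f
    using assms unfolding supp_def by simp
  then show "(\<lambda>f h. f h / \<sigma> (\<gamma> h)) ` hahn_carrier D \<subseteq> hahn_carrier D"
    unfolding hahn_carrier_def by auto
  show "hahn_twist \<sigma> \<gamma> ` hahn_carrier D \<subseteq> hahn_carrier D"
    unfolding hahn_carrier_def using supp_hahn_twist[of \<sigma> \<gamma>, OF assms] by auto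
qed (use assms in \<open>auto simp: hahn_twist_def\<close>)

lemma hahn_twist_add: "hahn_twist \<sigma> \<gamma> (hahn_add f g) = hahn_add (hahn_twist \<sigma> \<gamma> f) (hahn_twist \<sigma> \<gamma> g)"
  unfolding hahn_twist_def hahn_add_def by (simp add: algebra_simps)

lemma hahn_twist_one: "\<sigma> (\<gamma> 0) = 1 \<Longrightarrow> hahn_twist \<sigma> \<gamma> hahn_one = hahn_one"
  unfolding hahn_twist_def hahn_one_def by auto

lemma cross_section_coboundary:
  assumes "cross_section v A \<sigma>" "subgroup_of A" "cohomologous_via \<gamma> \<beta>' \<beta>"
    and "\<And>h. \<gamma> h \<in> A" "\<And>h h'. \<beta> h h' \<in> A" "\<And>h h'. \<beta>' h h' \<in> A"
  shows "\<sigma> (- \<beta>' h h') * \<sigma> (\<gamma> (h + h')) = \<sigma> (\<gamma> h) * \<sigma> (\<gamma> h') * \<sigma> (- \<beta> h h')"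
proof -
  have add: "\<And>a b. a \<in> A \<Longrightarrow> b \<in> A \<Longrightarrow> \<sigma> (a + b) = \<sigma> a * \<sigma> b"
    and closed: "\<And>a b. a \<in> A \<Longrightarrow> b \<in> A \<Longrightarrow> a + b \<in> A" and neg: "\<And>a. a \<in> A \<Longrightarrow> - a \<in> A"
    using assms(1,2) unfolding cross_section_def subgroup_of_def by blast+
  have "\<sigma> (- \<beta>' h h') * \<sigma> (\<gamma> (h + h')) = \<sigma> (- \<beta>' h h' + \<gamma> (h + h'))"
    using add[OF neg[OF assms(6)] assms(4)] by simp
  also have "- \<beta>' h h' + \<gamma> (h + h') = (\<gamma> h + \<gamma> h') + - \<beta> h h'"
    using assms(3) unfolding cohomologous_via_def by (simp add: algebra_simps)
  also have "\<sigma> \<dots> = \<sigma> (\<gamma> h) * \<sigma> (\<gamma> h') * \<sigma> (- \<beta> h h')"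
    using add[OF closed[OF assms(4,4)] neg[OF assms(5)]] add[OF assms(4,4)] by simp
  finally show ?thesis .
qed

lemma hahn_twist_mul:
  fixes \<sigma> :: "'g::ab_group_add \<Rightarrow> 'k::field"
  assumes "\<And>h. \<sigma> (\<gamma> h) \<noteq> 0"
    and "\<And>h h'. \<sigma> (- \<beta>' h h') * \<sigma> (\<gamma> (h + h')) = \<sigma> (\<gamma> h) * \<sigma> (\<gamma> h') * \<sigma> (- \<beta> h h')"
  shows "hahn_twist \<sigma> \<gamma> (hahn_mul \<sigma> \<beta>' f g) = hahn_mul \<sigma> \<beta> (hahn_twist \<sigma> \<gamma> f) (hahn_twist \<sigma> \<gamma> g)"
proof
  fix l
  let ?P = "{(h, h'). h + h' = l \<and> f h \<noteq> 0 \<and> g h' \<noteq> 0}"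
  have same_pairs: "{(h, h'). h + h' = l \<and> hahn_twist \<sigma> \<gamma> f h \<noteq> 0 \<and> hahn_twist \<sigma> \<gamma> g h' \<noteq> 0} = ?P"
    using assms(1) unfolding hahn_twist_def by simp
  have "hahn_twist \<sigma> \<gamma> (hahn_mul \<sigma> \<beta>' f g) l
      = (\<Sum>(h, h')\<in>?P. f h * g h' * (\<sigma> (- \<beta>' h h') * \<sigma> (\<gamma> (h + h'))))"
    unfolding hahn_twist_def hahn_mul_def sum_distrib_right
    by (intro sum.cong) (auto simp: mult.assoc)
  also have "\<dots> = (\<Sum>(h, h')\<in>?P. hahn_twist \<sigma> \<gamma> f h * hahn_twist \<sigma> \<gamma> g h' * \<sigma> (- \<beta> h h'))"
    unfolding hahn_twist_def assms(2) by (simp add: ac_simps)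
  finally show "hahn_twist \<sigma> \<gamma> (hahn_mul \<sigma> \<beta>' f g) l
      = hahn_mul \<sigma> \<beta> (hahn_twist \<sigma> \<gamma> f) (hahn_twist \<sigma> \<gamma> g) l"
    unfolding hahn_mul_def same_pairs .
qed

lemma well_ordered_supp_Least:
  assumes "well_ordered_set (supp f)" and "f \<noteq> (\<lambda>_. 0)"
  shows "f (LEAST h. f h \<noteq> 0) \<noteq> 0"
proof -
  have "supp f \<noteq> {}" using assms(2) unfolding supp_def by auto
  then obtain m where "m \<in> supp f" "\<forall>x\<in>supp f. m \<le> x"
    using assms(1) unfolding well_ordered_set_def by blast
  then have "(LEAST h. f h \<noteq> 0) = m"
    unfolding supp_def by (intro Least_equality) auto
  with \<open>m \<in> supp f\<close> show ?thesis unfolding supp_def by simp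
qed

lemma hahn_val_twist:
  assumes "valuation_onto v A" "cross_section v A \<sigma>" "\<And>h. \<gamma> h \<in> A"
    and "well_ordered_set (supp f)" "f \<noteq> (\<lambda>_. 0)"
  shows "hahn_val v (hahn_twist \<sigma> \<gamma> f) = gb_shift \<gamma> (hahn_val v f)"
proof -
  have \<sigma>: "\<sigma> (\<gamma> h) \<noteq> 0" "v (\<sigma> (\<gamma> h)) = \<gamma> h" for h
    using assms(2,3) unfolding cross_section_def by blast+
  define h\<^sub>0 where "h\<^sub>0 = (LEAST h. f h \<noteq> 0)"
  have "f h\<^sub>0 \<noteq> 0" unfolding h\<^sub>0_def using assms(4,5) by (rule well_ordered_supp_Least)
  then have "v (f h\<^sub>0 * \<sigma> (\<gamma> h\<^sub>0)) = v (f h\<^sub>0) + \<gamma> h\<^sub>0"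
    using assms(1) \<sigma> unfolding valuation_onto_def by metis
  moreover have "(\<lambda>h. hahn_twist \<sigma> \<gamma> f h \<noteq> 0) = (\<lambda>h. f h \<noteq> 0)"
    using \<sigma> unfolding hahn_twist_def by simp
  ultimately show ?thesis
    unfolding hahn_val_def Let_def gb_shift_def h\<^sub>0_def by (simp add: hahn_twist_def)
qed

theorem proposition2p3:
  fixes A :: "'g::linordered_ab_group_add set"
    and \<rho> :: "'g \<Rightarrow> 'h::linordered_ab_group_add"
    and v :: "'k::field_char_0 \<Rightarrow> 'g"
    and \<sigma> :: "'g \<Rightarrow> 'k"
    and D :: "'d set"
    and \<alpha> \<alpha>' :: "'h \<Rightarrow> 'g"
  assumes "smallest_nonzero_convex_subgroup A"
    and "is_quotient_projection A \<rho>"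
    and "valuation_onto v A"
    and "cross_section v A \<sigma>"
    and "infinite D"
    and "transversal_map \<rho> \<alpha>"
    and "transversal_map \<rho> \<alpha>'"
  shows "\<exists>\<phi> \<psi>. valued_field_iso D A v \<sigma> (cocycle \<alpha>') (cocycle \<alpha>) \<phi> \<psi>"
proof -
  define \<gamma> where "\<gamma> h = \<alpha>' h - \<alpha> h" for h
  have subgroup: "subgroup_of A"
    using assms(1) unfolding smallest_nonzero_convex_subgroup_def convex_subgroup_def by blast
  have \<gamma>: "\<gamma> h \<in> A" "\<sigma> (\<gamma> h) \<noteq> 0" for h
    using transversal_diff_in_kernel[OF assms(2,6,7)] assms(4)
    unfolding \<gamma>_def cross_section_def by blast+
  have cohom: "cohomologous_via \<gamma> (cocycle \<alpha>') (cocycle \<alpha>)"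
    unfolding \<gamma>_def by (rule cocycle_cohomologous)
  have \<sigma>_coboundary: "\<sigma> (- cocycle \<alpha>' h h') * \<sigma> (\<gamma> (h + h'))
      = \<sigma> (\<gamma> h) * \<sigma> (\<gamma> h') * \<sigma> (- cocycle \<alpha> h h')" for h h'
    using cross_section_coboundary[of v A \<sigma> \<gamma>, OF assms(4) subgroup cohom \<gamma>(1)]
      cocycle_in_kernel[OF assms(2,6)] cocycle_in_kernel[OF assms(2,7)] by blast
  have \<sigma>_\<gamma>_zero: "\<sigma> (\<gamma> 0) = 1"
    using assms(6,7) cross_section_zero[OF assms(4)] subgroup
    unfolding \<gamma>_def transversal_map_def subgroup_of_def by simp
  have well_ordered: "well_ordered_set (supp f)" if "f \<in> hahn_carrier D" for f
    using that unfolding hahn_carrier_def by blast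
  have "valued_field_iso D A v \<sigma> (cocycle \<alpha>') (cocycle \<alpha>) (hahn_twist \<sigma> \<gamma>) (gb_shift \<gamma>)"
    unfolding valued_field_iso_def
    using bij_betw_hahn_twist[of \<sigma> \<gamma>, OF \<gamma>(2)] bij_betw_gb_shift[of A \<gamma>, OF subgroup \<gamma>(1)]
      hahn_twist_add hahn_twist_one[of \<sigma> \<gamma>, OF \<sigma>_\<gamma>_zero] hahn_twist_mul[of \<sigma> \<gamma>, OF \<gamma>(2) \<sigma>_coboundary]
      gb_shift_add[OF cohom] gb_le_shift_iff
      hahn_val_twist[of v A \<sigma> \<gamma>, OF assms(3,4) \<gamma>(1) well_ordered]
    by blast
  then show ?thesis by blast
qed

end
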